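(* Consider two spiking layers $\hat\sigma$ and $\tilde\sigma$, each of width $N$ (same threshold $u_{th}$, reset $V_{reset}$, decay $\beta\in(0,1)$, applied coordinatewise), with the same initial temporal input vector $\tilde{\boldsymbol h}^0=\hat{\boldsymbol h}^0$, receiving spatial input feature vectors $\hat{\boldsymbol x}^t,\tilde{\boldsymbol x}^t\in\mathbb{R}^N$, $t=1,\dots,T$. Suppose each coordinate of $\hat{\boldsymbol u}^t=\hat{\boldsymbol h}^{t-1}+\hat{\boldsymbol x}^t$ is a random variable following a $u_{th}$-Neighborhood-Finite Distribution, that $|\tilde x^t_k-\hat x^t_k|\le\epsilon$ for all $k=1,\dots,N$ and $t=1,\dots,T$, and that $\hat\sigma^t(\hat{\boldsymbol x}^t)=\tilde\sigma^t(\tilde{\boldsymbol x}^t)$ for $t=1,\dots,T-1$. Then $P[\hat\sigma^T(\hat{\boldsymbol x}^T)\neq\tilde\sigma^T(\tilde{\boldsymbol x}^T)]$ has an upper bound proportional to $N\frac{\epsilon}{1-\beta}$ (i.e. it is at most a constant multiple of $N\frac{\epsilon}{1-\beta}$, the constant depending only on the distributions of the coordinates of $\hat{\boldsymbol u}^T$).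
   Context: A LIF spiking neuron with firing threshold $u_{th}$, reset potential $V_{reset}$ and decay factor $\beta\in(0,1)$ receives spatial input features $x^1,x^2,\dots$ and evolves by $u^t=h^{t-1}+x^t$, $s^t=\mathrm{Hea}(u^t-u_{th})$, $h^t=V_{reset}s^t+\beta u^t(1-s^t)$, where $\mathrm{Hea}(y)=1$ if $y\ge0$ and $0$ otherwise; the output at timestep $t$ is $\sigma^t(x^t)=s^t$. A spiking layer of width $N$ consists of $N$ such neurons acting independently on the coordinates of a vector input. A probability density $p$ is an $m$-Neighborhood-Finite Distribution if there exists $\epsilon>0$ with $\sup_{x\in[m-\epsilon,m+\epsilon]}p(x)<+\infty$. *)

theory Defs
  imports "HOL-Probability.Probability"
begin

definition hea :: "real \<Rightarrow> real" where
  "hea y = (if y \<ge> 0 then 1 else 0)"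

text \<open>Temporal state h^t of a single LIF neuron with threshold uth, reset vr, decay beta,
  initial temporal input h0 and spatial inputs x 1, x 2, ... (x 0 unused).\<close>
fun lif_h :: "real \<Rightarrow> real \<Rightarrow> real \<Rightarrow> real \<Rightarrow> (nat \<Rightarrow> real) \<Rightarrow> nat \<Rightarrow> real" where
  "lif_h uth vr beta h0 x 0 = h0"
| "lif_h uth vr beta h0 x (Suc t) =
     (let u = lif_h uth vr beta h0 x t + x (Suc t); s = hea (u - uth)
      in vr * s + beta * u * (1 - s))"

definition lif_u :: "real \<Rightarrow> real \<Rightarrow> real \<Rightarrow> real \<Rightarrow> (nat \<Rightarrow> real) \<Rightarrow> nat \<Rightarrow> real" where
  "lif_u uth vr beta h0 x t = lif_h uth vr beta h0 x (t - 1) + x t"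

definition lif_s :: "real \<Rightarrow> real \<Rightarrow> real \<Rightarrow> real \<Rightarrow> (nat \<Rightarrow> real) \<Rightarrow> nat \<Rightarrow> real" where
  "lif_s uth vr beta h0 x t = hea (lif_u uth vr beta h0 x t - uth)"

definition NFD :: "real \<Rightarrow> (real \<Rightarrow> real) \<Rightarrow> bool" where
  "NFD m p \<longleftrightarrow> p \<in> borel_measurable borel \<and> (\<forall>x. 0 \<le> p x)
     \<and> (\<integral>\<^sup>+ x. ennreal (p x) \<partial>lborel) = 1
     \<and> (\<exists>e>0. bdd_above (p ` {m - e .. m + e}))"

end

theory Submission
  imports Defs
begin

text \<open>As long as the two neurons emit the same spikes they are reset at the same times: after a
  spike both temporal states equal the reset potential, and otherwise their difference is the
  difference of the membrane potentials damped by \<beta>. Hence the temporal states stay within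
  \<epsilon>\<beta>/(1-\<beta>) of each other, and the membrane potentials at time T within \<epsilon>/(1-\<beta>).
  Differing outputs at time T therefore force the membrane potential of some coordinate to lie
  within \<epsilon>/(1-\<beta>) of the threshold. A density bounded by B on [u_th-e, u_th+e] gives this
  event probability at most (2B + 1/e) \<epsilon>/(1-\<beta>), and a union bound over the N coordinates
  gives the claim.\<close>

definition lif_reset :: "real \<Rightarrow> real \<Rightarrow> real \<Rightarrow> real \<Rightarrow> real" where
  "lif_reset uth vr beta u = (let s = hea (u - uth) in vr * s + beta * u * (1 - s))"

lemma lif_h_Suc_eq_lif_reset:
  "lif_h uth vr beta h0 x (Suc t) = lif_reset uth vr beta (lif_u uth vr beta h0 x (Suc t))"
  by (simp add: lif_reset_def lif_u_def Let_def)

lemma lif_reset_dist_le: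
  assumes "0 \<le> beta" and "hea (u - uth) = hea (v - uth)"
  shows "\<bar>lif_reset uth vr beta u - lif_reset uth vr beta v\<bar> \<le> beta * \<bar>u - v\<bar>"
proof (cases "uth \<le> u")
  case True
  with assms show ?thesis by (simp add: lif_reset_def hea_def)
next
  case False
  with assms have "lif_reset uth vr beta u - lif_reset uth vr beta v = beta * (u - v)"
    by (simp add: lif_reset_def hea_def split: if_splits) (simp add: algebra_simps)
  with assms show ?thesis by (simp add: abs_mult)
qed

lemma lif_h_dist_le:
  assumes beta: "0 \<le> beta" "beta < 1" and "0 \<le> eps"
    and input: "\<And>t. t \<in> {1..n} \<Longrightarrow> \<bar>xt t - xh t\<bar> \<le> eps"
    and spikes: "\<And>t. t \<in> {1..n} \<Longrightarrow> lif_s uth vr beta h0 xh t = lif_s uth vr beta h0 xt t"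
  shows "\<bar>lif_h uth vr beta h0 xt n - lif_h uth vr beta h0 xh n\<bar> \<le> eps * beta / (1 - beta)"
  using input spikes
proof (induction n)
  case 0
  with beta \<open>0 \<le> eps\<close> show ?case by simp
next
  case (Suc n)
  let ?ut = "lif_u uth vr beta h0 xt (Suc n)" and ?uh = "lif_u uth vr beta h0 xh (Suc n)"
  have "\<bar>lif_h uth vr beta h0 xt n - lif_h uth vr beta h0 xh n\<bar> \<le> eps * beta / (1 - beta)"
    using Suc by simp
  moreover have "\<bar>xt (Suc n) - xh (Suc n)\<bar> \<le> eps"
    using Suc.prems(1) by simp
  moreover have "eps * beta / (1 - beta) + eps = eps / (1 - beta)"
    using beta by (simp add: field_simps)
  ultimately have du: "\<bar>?ut - ?uh\<bar> \<le> eps / (1 - beta)"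
    unfolding lif_u_def by simp
  have "hea (?ut - uth) = hea (?uh - uth)"
    using Suc.prems(2)[of "Suc n"] by (simp add: lif_s_def)
  then have "\<bar>lif_reset uth vr beta ?ut - lif_reset uth vr beta ?uh\<bar> \<le> beta * \<bar>?ut - ?uh\<bar>"
    using beta by (intro lif_reset_dist_le)
  also have "\<dots> \<le> beta * (eps / (1 - beta))"
    using du beta by (intro mult_left_mono)
  also have "\<dots> = eps * beta / (1 - beta)"
    by simp
  finally show ?case
    by (simp only: lif_h_Suc_eq_lif_reset)
qed

lemma lif_u_dist_le:
  assumes "0 \<le> beta" "beta < 1" "1 \<le> T"
    and input: "\<And>t. t \<in> {1..T} \<Longrightarrow> \<bar>xt t - xh t\<bar> \<le> eps"
    and spikes: "\<And>t. t \<in> {1..<T} \<Longrightarrow> lif_s uth vr beta h0 xh t = lif_s uth vr beta h0 xt t"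
  shows "\<bar>lif_u uth vr beta h0 xt T - lif_u uth vr beta h0 xh T\<bar> \<le> eps / (1 - beta)"
proof -
  have input_T: "\<bar>xt T - xh T\<bar> \<le> eps"
    using input \<open>1 \<le> T\<close> by simp
  then have "0 \<le> eps"
    by (rule order_trans[OF abs_ge_zero])
  have "\<bar>lif_h uth vr beta h0 xt (T - 1) - lif_h uth vr beta h0 xh (T - 1)\<bar> \<le> eps * beta / (1 - beta)"
    using assms \<open>0 \<le> eps\<close> by (intro lif_h_dist_le) auto
  moreover note input_T
  moreover have "eps * beta / (1 - beta) + eps = eps / (1 - beta)"
    using \<open>beta < 1\<close> by (simp add: field_simps)
  ultimately show ?thesis
    unfolding lif_u_def by simp
qed

lemma hea_diff_ne_imp_dist_le:
  assumes "hea (u - c) \<noteq> hea (v - c)"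
  shows "\<bar>u - c\<bar> \<le> \<bar>u - v\<bar>"
  using assms by (auto simp: hea_def split: if_splits)

lemma lif_s_ne_imp_near_threshold:
  assumes "0 \<le> beta" "beta < 1" "1 \<le> T"
    and "\<And>t. t \<in> {1..T} \<Longrightarrow> \<bar>xt t - xh t\<bar> \<le> eps"
    and "\<And>t. t \<in> {1..<T} \<Longrightarrow> lif_s uth vr beta h0 xh t = lif_s uth vr beta h0 xt t"
    and "lif_s uth vr beta h0 xh T \<noteq> lif_s uth vr beta h0 xt T"
  shows "\<bar>lif_u uth vr beta h0 xh T - uth\<bar> \<le> eps / (1 - beta)"
proof -
  have "\<bar>lif_u uth vr beta h0 xh T - uth\<bar> \<le> \<bar>lif_u uth vr beta h0 xh T - lif_u uth vr beta h0 xt T\<bar>"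
    using assms(6) unfolding lif_s_def by (rule hea_diff_ne_imp_dist_le)
  also have "\<dots> \<le> eps / (1 - beta)"
    using lif_u_dist_le[OF assms(1-5)] by (simp add: abs_minus_commute)
  finally show ?thesis .
qed

lemma measure_dist_le_of_density_le:
  assumes "finite_measure M" and distr: "distributed M lborel X (\<lambda>x. ennreal (f x))"
    and "0 \<le> B" and bound: "\<And>x. x \<in> {m - d..m + d} \<Longrightarrow> f x \<le> B" and "0 \<le> d"
  shows "measure M {\<omega> \<in> space M. \<bar>X \<omega> - m\<bar> \<le> d} \<le> 2 * B * d"
proof -
  interpret finite_measure M by fact
  let ?I = "{m - d..m + d}"
  have X: "X \<in> measurable M lborel"
    using distr by (rule distributed_measurable)
  have f: "(\<lambda>x. ennreal (f x)) \<in> borel_measurable lborel"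
    using distributed_borel_measurable[OF distr] by simp
  have "{\<omega> \<in> space M. \<bar>X \<omega> - m\<bar> \<le> d} = X -` ?I \<inter> space M"
    by auto
  then have "emeasure M {\<omega> \<in> space M. \<bar>X \<omega> - m\<bar> \<le> d} = emeasure (distr M lborel X) ?I"
    using X by (simp add: emeasure_distr)
  also have "\<dots> = (\<integral>\<^sup>+ x. ennreal (f x) * indicator ?I x \<partial>lborel)"
    using f by (simp add: distributed_distr_eq_density[OF distr] emeasure_density)
  also have "\<dots> \<le> (\<integral>\<^sup>+ x. ennreal B * indicator ?I x \<partial>lborel)"
    using bound by (intro nn_integral_mono) (simp add: indicator_def ennreal_leI)
  also have "\<dots> = ennreal (2 * B * d)"
    using \<open>0 \<le> B\<close> \<open>0 \<le> d\<close>
    by (subst nn_integral_cmult_indicator) (simp_all add: ennreal_mult[symmetric])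
  finally show ?thesis
    using \<open>0 \<le> B\<close> \<open>0 \<le> d\<close> by (simp add: emeasure_eq_measure ennreal_le_iff)
qed

lemma NFD_prob_dist_le:
  assumes "NFD m p"
  shows "\<exists>K \<ge> 0. \<forall>(M :: 'a measure) X d. prob_space M \<longrightarrow>
           distributed M lborel X (\<lambda>x. ennreal (p x)) \<longrightarrow> 0 \<le> d \<longrightarrow>
           measure M {\<omega> \<in> space M. \<bar>X \<omega> - m\<bar> \<le> d} \<le> K * d"
proof -
  obtain e B where "0 < e" and bound: "\<And>x. x \<in> {m - e..m + e} \<Longrightarrow> p x \<le> B"
    using assms unfolding NFD_def bdd_above_def by blast
  have "0 \<le> p m"
    using assms by (simp add: NFD_def)
  also have "p m \<le> B"
    using \<open>0 < e\<close> by (intro bound) simp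
  finally have "0 \<le> B" .
  have "measure M {\<omega> \<in> space M. \<bar>X \<omega> - m\<bar> \<le> d} \<le> (2 * B + 1 / e) * d"
    if "prob_space M" "distributed M lborel X (\<lambda>x. ennreal (p x))" "0 \<le> d"
    for M :: "'a measure" and X d
  proof (cases "d \<le> e")
    case True
    then have "measure M {\<omega> \<in> space M. \<bar>X \<omega> - m\<bar> \<le> d} \<le> 2 * B * d"
      using True bound \<open>0 \<le> d\<close>
      using prob_space.finite_measure[OF that(1)]
      by (intro measure_dist_le_of_density_le[OF _ that(2) \<open>0 \<le> B\<close>]) auto
    also have "\<dots> \<le> (2 * B + 1 / e) * d"
      using \<open>0 < e\<close> \<open>0 \<le> d\<close> by (simp add: algebra_simps)
    finally show ?thesis .
  next
    case False
    have "measure M {\<omega> \<in> space M. \<bar>X \<omega> - m\<bar> \<le> d} \<le> 1"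
      using \<open>prob_space M\<close> by (rule prob_space.prob_le_1)
    also have "\<dots> \<le> d / e"
      using False \<open>0 < e\<close> by simp
    also have "\<dots> \<le> (2 * B + 1 / e) * d"
      using \<open>0 \<le> B\<close> \<open>0 \<le> d\<close> by (simp add: algebra_simps)
    finally show ?thesis .
  qed
  moreover have "0 \<le> 2 * B + 1 / e"
    using \<open>0 \<le> B\<close> \<open>0 < e\<close> by simp
  ultimately show ?thesis
    by blast
qed

lemma measure_le_card_mult_if_subset_Ex:
  assumes "finite_measure M"
    and sets: "\<And>k. k < N \<Longrightarrow> {\<omega> \<in> space M. P k \<omega>} \<in> sets M"
    and bound: "\<And>k. k < N \<Longrightarrow> measure M {\<omega> \<in> space M. P k \<omega>} \<le> c"
    and subset: "A \<subseteq> {\<omega> \<in> space M. \<exists>k<N. P k \<omega>}"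
  shows "measure M A \<le> real N * c"
proof -
  interpret finite_measure M by fact
  have "A \<subseteq> (\<Union>k<N. {\<omega> \<in> space M. P k \<omega>})"
    using subset by blast
  then have "measure M A \<le> measure M (\<Union>k<N. {\<omega> \<in> space M. P k \<omega>})"
    using sets by (intro finite_measure_mono) auto
  also have "\<dots> \<le> (\<Sum>k<N. measure M {\<omega> \<in> space M. P k \<omega>})"
    using sets by (intro measure_UNION_le) auto
  also have "\<dots> \<le> (\<Sum>k<N. c)"
    using bound by (intro sum_mono) auto
  finally show ?thesis
    by simp
qed

lemma prob_lif_s_mismatch_le:
  assumes "prob_space M" "0 < beta" "beta < 1" "1 \<le> T"
    and meas: "\<forall>k<N. (\<lambda>\<omega>. lif_u uth vr beta (h0 \<omega> k) (\<lambda>s. Xh \<omega> s k) T) \<in> borel_measurable M"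
    and conc: "\<forall>k<N. \<forall>d\<ge>0.
      measure M {\<omega> \<in> space M. \<bar>lif_u uth vr beta (h0 \<omega> k) (\<lambda>s. Xh \<omega> s k) T - uth\<bar> \<le> d} \<le> C * d"
    and input: "\<forall>\<omega>\<in>space M. \<forall>t\<in>{1..T}. \<forall>k<N. \<bar>Xt \<omega> t k - Xh \<omega> t k\<bar> \<le> eps"
    and spikes: "\<forall>\<omega>\<in>space M. \<forall>t\<in>{1..<T}. \<forall>k<N.
      lif_s uth vr beta (h0 \<omega> k) (\<lambda>s. Xh \<omega> s k) t = lif_s uth vr beta (h0 \<omega> k) (\<lambda>s. Xt \<omega> s k) t"
  shows "measure M {\<omega> \<in> space M. \<exists>k<N.
      lif_s uth vr beta (h0 \<omega> k) (\<lambda>s. Xh \<omega> s k) T \<noteq> lif_s uth vr beta (h0 \<omega> k) (\<lambda>s. Xt \<omega> s k) T}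
    \<le> C * real N * (eps / (1 - beta))"
proof (cases "N = 0")
  case True
  then show ?thesis by simp
next
  case False
  interpret prob_space M by fact
  define d where "d = eps / (1 - beta)"
  obtain \<omega>\<^sub>0 where "\<omega>\<^sub>0 \<in> space M"
    using not_empty by blast
  then have "0 \<le> eps"
    using input False \<open>1 \<le> T\<close> by (meson abs_ge_zero atLeastAtMost_iff le_refl neq0_conv order_trans)
  then have "0 \<le> d"
    using \<open>beta < 1\<close> by (simp add: d_def)
  have near_sets: "{\<omega> \<in> space M. \<bar>lif_u uth vr beta (h0 \<omega> k) (\<lambda>s. Xh \<omega> s k) T - uth\<bar> \<le> d} \<in> sets M"
    if "k < N" for k
  proof -
    have [measurable]: "(\<lambda>\<omega>. lif_u uth vr beta (h0 \<omega> k) (\<lambda>s. Xh \<omega> s k) T) \<in> borel_measurable M"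
      using meas that by blast
    show ?thesis
      by measurable
  qed
  have "measure M {\<omega> \<in> space M. \<exists>k<N.
      lif_s uth vr beta (h0 \<omega> k) (\<lambda>s. Xh \<omega> s k) T \<noteq> lif_s uth vr beta (h0 \<omega> k) (\<lambda>s. Xt \<omega> s k) T}
    \<le> real N * (C * d)"
  proof (rule measure_le_card_mult_if_subset_Ex[OF finite_measure_axioms near_sets])
    show "measure M {\<omega> \<in> space M. \<bar>lif_u uth vr beta (h0 \<omega> k) (\<lambda>s. Xh \<omega> s k) T - uth\<bar> \<le> d} \<le> C * d"
      if "k < N" for k
      using conc that \<open>0 \<le> d\<close> by blast
  next
    show "{\<omega> \<in> space M. \<exists>k<N.
        lif_s uth vr beta (h0 \<omega> k) (\<lambda>s. Xh \<omega> s k) T \<noteq> lif_s uth vr beta (h0 \<omega> k) (\<lambda>s. Xt \<omega> s k) T}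
      \<subseteq> {\<omega> \<in> space M. \<exists>k<N. \<bar>lif_u uth vr beta (h0 \<omega> k) (\<lambda>s. Xh \<omega> s k) T - uth\<bar> \<le> d}"
    proof (safe)
      fix \<omega> k
      assume "\<omega> \<in> space M" "k < N" and
        ne: "lif_s uth vr beta (h0 \<omega> k) (\<lambda>s. Xh \<omega> s k) T \<noteq> lif_s uth vr beta (h0 \<omega> k) (\<lambda>s. Xt \<omega> s k) T"
      then have "\<bar>lif_u uth vr beta (h0 \<omega> k) (\<lambda>s. Xh \<omega> s k) T - uth\<bar> \<le> d"
        using assms unfolding d_def by (intro lif_s_ne_imp_near_threshold[OF _ _ _ _ _ ne]) auto
      then show "\<exists>k<N. \<bar>lif_u uth vr beta (h0 \<omega> k) (\<lambda>s. Xh \<omega> s k) T - uth\<bar> \<le> d"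
        using \<open>k < N\<close> by blast
    qed
  qed
  then show ?thesis
    by (simp add: d_def mult_ac)
qed

theorem theorem1:
  fixes uth :: real and N :: nat and p :: "nat \<Rightarrow> real \<Rightarrow> real"
  assumes "\<forall>k<N. NFD uth (p k)"
  shows "\<exists>C::real. \<forall>(M::'a measure) vr beta T eps
            (h0 :: 'a \<Rightarrow> nat \<Rightarrow> real) (Xh :: 'a \<Rightarrow> nat \<Rightarrow> nat \<Rightarrow> real) (Xt :: 'a \<Rightarrow> nat \<Rightarrow> nat \<Rightarrow> real).
     prob_space M \<and> 0 < beta \<and> beta < 1 \<and> 1 \<le> T
     \<and> (\<forall>k. (\<lambda>\<omega>. h0 \<omega> k) \<in> borel_measurable M)
     \<and> (\<forall>t k. (\<lambda>\<omega>. Xh \<omega> t k) \<in> borel_measurable M)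
     \<and> (\<forall>t k. (\<lambda>\<omega>. Xt \<omega> t k) \<in> borel_measurable M)
     \<and> (\<forall>t\<in>{1..<T}. \<forall>k<N. \<exists>q. NFD uth q \<and>
          distributed M lborel (\<lambda>\<omega>. lif_u uth vr beta (h0 \<omega> k) (\<lambda>s. Xh \<omega> s k) t)
            (\<lambda>x. ennreal (q x)))
     \<and> (\<forall>k<N. distributed M lborel (\<lambda>\<omega>. lif_u uth vr beta (h0 \<omega> k) (\<lambda>s. Xh \<omega> s k) T)
            (\<lambda>x. ennreal (p k x)))
     \<and> (\<forall>\<omega>\<in>space M. \<forall>t\<in>{1..T}. \<forall>k<N. \<bar>Xt \<omega> t k - Xh \<omega> t k\<bar> \<le> eps)
     \<and> (\<forall>\<omega>\<in>space M. \<forall>t\<in>{1..<T}. \<forall>k<N.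
          lif_s uth vr beta (h0 \<omega> k) (\<lambda>s. Xh \<omega> s k) t
          = lif_s uth vr beta (h0 \<omega> k) (\<lambda>s. Xt \<omega> s k) t)
     \<longrightarrow> measure M {\<omega>\<in>space M. \<exists>k<N.
            lif_s uth vr beta (h0 \<omega> k) (\<lambda>s. Xh \<omega> s k) T
            \<noteq> lif_s uth vr beta (h0 \<omega> k) (\<lambda>s. Xt \<omega> s k) T}
         \<le> C * real N * (eps / (1 - beta))"
proof -
  define conc_bound where "conc_bound k K \<longleftrightarrow> 0 \<le> K \<and>
    (\<forall>(M :: 'a measure) X d. prob_space M \<longrightarrow> distributed M lborel X (\<lambda>x. ennreal (p k x)) \<longrightarrow>
       0 \<le> d \<longrightarrow> measure M {\<omega> \<in> space M. \<bar>X \<omega> - uth\<bar> \<le> d} \<le> K * d)" for k K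
  have "\<forall>k. \<exists>K. k < N \<longrightarrow> conc_bound k K"
    using assms NFD_prob_dist_le unfolding conc_bound_def by blast
  from choice[OF this] obtain K where K: "\<forall>k. k < N \<longrightarrow> conc_bound k (K k)" ..
  define C where "C = (\<Sum>k<N. K k)"
  have conc: "measure M {\<omega> \<in> space M. \<bar>X \<omega> - uth\<bar> \<le> d} \<le> C * d"
    if "k < N" "prob_space M" "distributed M lborel X (\<lambda>x. ennreal (p k x))" "0 \<le> d"
    for k and M :: "'a measure" and X d
  proof -
    have "K k \<le> C"
      unfolding C_def using K that(1) by (intro member_le_sum) (auto simp: conc_bound_def)
    then show ?thesis
      using K that unfolding conc_bound_def by (meson mult_right_mono order_trans)
  qed
  show ?thesis
  proof (intro exI[of _ C] allI impI, elim conjE, goal_cases)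
    case (1 M vr beta T eps h0 Xh Xt)
    note distr = 1(9)
    have meas: "\<forall>k<N. (\<lambda>\<omega>. lif_u uth vr beta (h0 \<omega> k) (\<lambda>s. Xh \<omega> s k) T) \<in> borel_measurable M"
      using distr distributed_measurable measurable_lborel1 by blast
    have "\<forall>k<N. \<forall>d\<ge>0. measure M {\<omega> \<in> space M.
        \<bar>lif_u uth vr beta (h0 \<omega> k) (\<lambda>s. Xh \<omega> s k) T - uth\<bar> \<le> d} \<le> C * d"
      using conc[OF _ 1(1)] distr by simp
    then show ?case
      by (rule prob_lif_s_mismatch_le[OF 1(1-4) meas _ 1(10,11)])
  qed
qed

end
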